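(* Let $\Gamma$ be the middle-third Cantor set. Then: (1) the set of all uniformly perfect metrics in $\mathrm{Met}(\Gamma)$ is a dense $F_\sigma$ subset of $(\mathrm{Met}(\Gamma),\mathcal{D}_\Gamma)$; (2) the set of all non-uniformly perfect metrics in $\mathrm{Met}(\Gamma)$ is a dense $G_\delta$ subset of $(\mathrm{Met}(\Gamma),\mathcal{D}_\Gamma)$.
   Context: For a metrizable space $X$, $\mathrm{Met}(X)$ is the set of all metrics on $X$ generating its topology, with the (possibly $\infty$-valued) metric $\mathcal{D}_X(d,e)=\sup_{x,y\in X}|d(x,y)-e(x,y)|$. For $c\in(0,1)$, a metric space $(X,d)$ is $c$-uniformly perfect if for every $x\in X$ and every $r\in(0,\delta_d(X))$ (where $\delta_d(X)$ is the diameter) there is $y\in X$ with $c r\le d(x,y)\le r$; it is uniformly perfect if it is $c$-uniformly perfect for some $c\in(0,1)$. $F_\sigma$: countable union of closed sets; $G_\delta$: countable intersection of open sets. *)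

theory Defs
  imports "HOL-Analysis.Analysis"
begin

definition cantor_set :: "real set" where
  "cantor_set = {(\<Sum>k. 2 * of_bool (b k) / 3 ^ Suc k) | b :: nat \<Rightarrow> bool. True}"

text \<open>A metric on X is
  represented as a function on the whole ambient type, normalised to be 0 off X \<times> X,
  so that each metric on X has exactly one representative.\<close>
definition Met :: "'a::topological_space set \<Rightarrow> ('a \<Rightarrow> 'a \<Rightarrow> real) set" where
  "Met X = {d. Metric_space X d
              \<and> Metric_space.mtopology X d = top_of_set X
              \<and> (\<forall>x y. x \<notin> X \<or> y \<notin> X \<longrightarrow> d x y = 0)}"

definition DX :: "'a set \<Rightarrow> ('a \<Rightarrow> 'a \<Rightarrow> real) \<Rightarrow> ('a \<Rightarrow> 'a \<Rightarrow> real) \<Rightarrow> ereal" where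
  "DX X d e = (SUP p \<in> X \<times> X. ereal \<bar>d (fst p) (snd p) - e (fst p) (snd p)\<bar>)"

definition Met_open :: "'a::topological_space set \<Rightarrow> ('a \<Rightarrow> 'a \<Rightarrow> real) set \<Rightarrow> bool" where
  "Met_open X U \<longleftrightarrow> U \<subseteq> Met X \<and>
     (\<forall>d\<in>U. \<exists>\<epsilon>>0. \<forall>e\<in>Met X. DX X d e < ereal \<epsilon> \<longrightarrow> e \<in> U)"

lemma istopology_Met_open: "istopology (Met_open X)"
  unfolding istopology_def Met_open_def
proof (rule conjI; intro allI impI)
  fix S T assume assms_S: "S \<subseteq> Met X \<and> (\<forall>d\<in>S. \<exists>\<epsilon>>0. \<forall>e\<in>Met X. DX X d e < ereal \<epsilon> \<longrightarrow> e \<in> S)"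
    and assms_T: "T \<subseteq> Met X \<and> (\<forall>d\<in>T. \<exists>\<epsilon>>0. \<forall>e\<in>Met X. DX X d e < ereal \<epsilon> \<longrightarrow> e \<in> T)"
  show "S \<inter> T \<subseteq> Met X \<and> (\<forall>d\<in>S \<inter> T. \<exists>\<epsilon>>0. \<forall>e\<in>Met X. DX X d e < ereal \<epsilon> \<longrightarrow> e \<in> S \<inter> T)"
  proof (intro conjI ballI)
    fix d assume d: "d \<in> S \<inter> T"
    from assms_S d obtain a where a: "a > 0" "\<forall>e\<in>Met X. DX X d e < ereal a \<longrightarrow> e \<in> S" by blast
    from assms_T d obtain b where b: "b > 0" "\<forall>e\<in>Met X. DX X d e < ereal b \<longrightarrow> e \<in> T" by blast
    show "\<exists>\<epsilon>>0. \<forall>e\<in>Met X. DX X d e < ereal \<epsilon> \<longrightarrow> e \<in> S \<inter> T"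
    proof (rule exI[of _ "min a b"], intro conjI ballI impI)
      show "0 < min a b" using a b by simp
    next
      fix e assume "e \<in> Met X" "DX X d e < ereal (min a b)"
      moreover have "ereal (min a b) \<le> ereal a" "ereal (min a b) \<le> ereal b" by auto
      ultimately show "e \<in> S \<inter> T" using a b by (meson IntI order_less_le_trans)
    qed
  qed (use assms_S in blast)
next
  fix K assume K: "\<forall>S\<in>K. S \<subseteq> Met X \<and> (\<forall>d\<in>S. \<exists>\<epsilon>>0. \<forall>e\<in>Met X. DX X d e < ereal \<epsilon> \<longrightarrow> e \<in> S)"
  show "\<Union>K \<subseteq> Met X \<and> (\<forall>d\<in>\<Union>K. \<exists>\<epsilon>>0. \<forall>e\<in>Met X. DX X d e < ereal \<epsilon> \<longrightarrow> e \<in> \<Union>K)"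
  proof (intro conjI ballI)
    show "\<Union>K \<subseteq> Met X" using K by auto
  next
    fix d assume "d \<in> \<Union>K"
    then obtain S where S: "S \<in> K" "d \<in> S" by auto
    with K obtain a where "a > 0" "\<forall>e\<in>Met X. DX X d e < ereal a \<longrightarrow> e \<in> S" by blast
    then show "\<exists>\<epsilon>>0. \<forall>e\<in>Met X. DX X d e < ereal \<epsilon> \<longrightarrow> e \<in> \<Union>K" using S by blast
  qed
qed

definition Met_topology :: "'a::topological_space set \<Rightarrow> ('a \<Rightarrow> 'a \<Rightarrow> real) topology" where
  "Met_topology X = topology (Met_open X)"

lemma openin_Met_topology: "openin (Met_topology X) U \<longleftrightarrow> Met_open X U"
  unfolding Met_topology_def by (simp add: istopology_Met_open)

definition mdiam :: "'a set \<Rightarrow> ('a \<Rightarrow> 'a \<Rightarrow> real) \<Rightarrow> ereal" where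
  "mdiam X d = (SUP p \<in> X \<times> X. ereal (d (fst p) (snd p)))"

definition c_uniformly_perfect :: "real \<Rightarrow> 'a set \<Rightarrow> ('a \<Rightarrow> 'a \<Rightarrow> real) \<Rightarrow> bool" where
  "c_uniformly_perfect c X d \<longleftrightarrow>
     (\<forall>x\<in>X. \<forall>r. 0 < r \<and> ereal r < mdiam X d \<longrightarrow> (\<exists>y\<in>X. c * r \<le> d x y \<and> d x y \<le> r))"

definition uniformly_perfect :: "'a set \<Rightarrow> ('a \<Rightarrow> 'a \<Rightarrow> real) \<Rightarrow> bool" where
  "uniformly_perfect X d \<longleftrightarrow> (\<exists>c. 0 < c \<and> c < 1 \<and> c_uniformly_perfect c X d)"

end

theory Submission
  imports Defs
begin

text \<open>For each \<open>c\<close>, the metrics satisfying a \<open>\<delta>\<close>-relaxed form of \<open>c\<close>-uniform perfectness form a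
  closed subset of \<open>Met X\<close>, and the uniformly perfect metrics are the union of these sets over
  \<open>c = 1/n\<close>; this gives the \<open>F\<^sub>\<sigma>\<close> and \<open>G\<^sub>\<delta>\<close> parts for any space.

  For density, let \<open>d \<in> Met \<Gamma>\<close>.  Being uniformly continuous on the compact Cantor set, \<open>d\<close>
  barely changes if each sufficiently small cylinder (points sharing the first \<open>m\<close> ternary digits)
  is collapsed to a representative and given a rescaled Euclidean metric inside; flipping single
  digits shows the result is uniformly perfect.  On the other hand \<open>max d |h x - h y|\<close>, with a
  small continuous \<open>h\<close> that forces all distances from the point \<open>0\<close> into a sequence
  \<open>a\<^sub>j\<close> with \<open>a\<^sub>j\<^sub>+\<^sub>1 / a\<^sub>j \<rightarrow> 0\<close>, is a nearby metric that is not uniformly perfect.\<close>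

section \<open>The Cantor set and ternary digits\<close>

definition cantor_term :: "(nat \<Rightarrow> bool) \<Rightarrow> nat \<Rightarrow> real" where
  "cantor_term b k = 2 * of_bool (b k) / 3 ^ Suc k"

definition cantor_point :: "(nat \<Rightarrow> bool) \<Rightarrow> real" where
  "cantor_point b = (\<Sum>k. cantor_term b k)"

lemma cantor_set_eq_range: "cantor_set = range cantor_point"
  unfolding cantor_set_def cantor_point_def cantor_term_def by (simp add: full_SetCompr_eq)

lemma cantor_point_in_cantor_set [simp]: "cantor_point b \<in> cantor_set"
  unfolding cantor_set_eq_range by simp

lemma sums_cantor_weight_tail: "(\<lambda>j. 2 / 3 ^ Suc (j + m) :: real) sums (1 / 3 ^ m)"
proof -
  have "(\<lambda>j. (2 / 3 ^ Suc m) * (1/3::real) ^ j) sums ((2 / 3 ^ Suc m) * (1 / (1 - 1/3)))"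
    by (intro sums_mult geometric_sums) simp
  moreover have "(2 / 3 ^ Suc m) * (1/3::real) ^ j = 2 / 3 ^ Suc (j + m)" for j
    by (simp add: power_add power_one_over field_simps)
  ultimately show ?thesis by simp
qed

lemma summable_cantor_weight: "summable (\<lambda>k. 2 / 3 ^ Suc k :: real)"
  using sums_cantor_weight_tail[of 0] by (simp add: sums_summable)

lemma abs_cantor_term_diff_le: "\<bar>cantor_term b k - cantor_term b' k\<bar> \<le> 2 / 3 ^ Suc k"
  by (simp add: cantor_term_def)

lemma summable_cantor_term: "summable (cantor_term b)"
  by (rule summable_comparison_test[OF _ summable_cantor_weight]) (auto simp: cantor_term_def)

lemma cantor_point_diff_split:
  "cantor_point b - cantor_point b' =
     (\<Sum>i<m. cantor_term b i - cantor_term b' i) + (\<Sum>j. cantor_term b (j + m) - cantor_term b' (j + m))"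
proof -
  have "summable (\<lambda>k. cantor_term b k - cantor_term b' k)"
    by (intro summable_diff summable_cantor_term)
  from suminf_split_initial_segment[OF this, of m] show ?thesis
    unfolding cantor_point_def suminf_diff[OF summable_cantor_term summable_cantor_term] by simp
qed

lemma cantor_tail_le: "\<bar>\<Sum>j. cantor_term b (j + m) - cantor_term b' (j + m)\<bar> \<le> 1 / 3 ^ m"
proof -
  let ?u = "\<lambda>j. cantor_term b (j + m) - cantor_term b' (j + m)"
  have weights: "summable (\<lambda>j. 2 / 3 ^ Suc (j + m) :: real)"
    using sums_cantor_weight_tail sums_summable by blast
  have abs_summable: "summable (\<lambda>j. \<bar>?u j\<bar>)"
    by (rule summable_rabs_comparison_test[OF _ weights]) (use abs_cantor_term_diff_le in blast)
  have "\<bar>suminf ?u\<bar> \<le> (\<Sum>j. \<bar>?u j\<bar>)" by (rule summable_rabs[OF abs_summable])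
  also have "\<dots> \<le> (\<Sum>j. 2 / 3 ^ Suc (j + m))"
    by (rule suminf_le[OF _ abs_summable weights]) (rule abs_cantor_term_diff_le)
  also have "\<dots> = 1 / 3 ^ m" using sums_cantor_weight_tail sums_unique by metis
  finally show ?thesis .
qed

lemma cantor_prefix_diff_eq_0:
  "\<forall>k<m. b k = b' k \<Longrightarrow> (\<Sum>i<m. cantor_term b i - cantor_term b' i) = 0"
  by (simp add: cantor_term_def)

lemma cantor_point_dist_le:
  assumes "\<forall>k<m. b k = b' k"
  shows "\<bar>cantor_point b - cantor_point b'\<bar> \<le> 1 / 3 ^ m"
  using cantor_point_diff_split[of b b' m] cantor_tail_le[of b m b'] cantor_prefix_diff_eq_0[OF assms]
  by simp

text \<open>The first differing digit contributes \<open>2/3^(k+1)\<close>, more than the tail can compensate.\<close>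
lemma cantor_point_dist_ge:
  assumes "b k \<noteq> b' k" "\<forall>j<k. b j = b' j"
  shows "1 / 3 ^ Suc k \<le> \<bar>cantor_point b - cantor_point b'\<bar>"
proof -
  have "cantor_point b - cantor_point b' =
          (cantor_term b k - cantor_term b' k) + (\<Sum>j. cantor_term b (j + Suc k) - cantor_term b' (j + Suc k))"
    using cantor_point_diff_split[of b b' "Suc k"] cantor_prefix_diff_eq_0[OF assms(2)] by simp
  moreover have "\<bar>cantor_term b k - cantor_term b' k\<bar> = 2 / 3 ^ Suc k"
    using assms(1) by (cases "b k") (auto simp: cantor_term_def)
  moreover note cantor_tail_le[of b "Suc k" b']
  ultimately show ?thesis by linarith
qed

lemma cantor_point_dist_less_imp_agree:
  assumes "\<bar>cantor_point b - cantor_point b'\<bar> < 1 / 3 ^ m"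
  shows "\<forall>k<m. b k = b' k"
proof (rule ccontr)
  assume "\<not> ?thesis"
  then obtain k where k: "b k \<noteq> b' k" "k < m" and below: "\<forall>j<k. \<not> (b j \<noteq> b' j \<and> j < m)"
    using exists_least_iff[of "\<lambda>k. b k \<noteq> b' k \<and> k < m"] by blast
  then have first: "\<forall>j<k. b j = b' j" by auto
  have "(1::real) / 3 ^ m \<le> 1 / 3 ^ Suc k"
    using k(2) by (intro divide_left_mono power_increasing) auto
  with cantor_point_dist_ge[OF k(1) first] assms show False by linarith
qed

lemma inj_cantor_point: "inj cantor_point"
proof (rule injI)
  fix b b' assume "cantor_point b = cantor_point b'"
  then have "\<forall>k<Suc n. b k = b' k" for n by (intro cantor_point_dist_less_imp_agree) simp
  then show "b = b'" by (intro ext) (metis lessI)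
qed

lemma cantor_point_flip_dist: "\<bar>cantor_point (b(k := \<not> b k)) - cantor_point b\<bar> = 2 / 3 ^ Suc k"
proof -
  let ?u = "\<lambda>j. cantor_term (b(k := \<not> b k)) j - cantor_term b j"
  have "?u = (\<lambda>j. if j = k then ?u k else 0)" by (auto simp: cantor_term_def)
  then have "?u sums ?u k" using sums_single[of k "\<lambda>_. ?u k"] by metis
  moreover have "?u sums (cantor_point (b(k := \<not> b k)) - cantor_point b)"
    unfolding cantor_point_def by (intro sums_diff summable_sums summable_cantor_term)
  ultimately have "cantor_point (b(k := \<not> b k)) - cantor_point b = ?u k"
    using sums_unique2 by blast
  then show ?thesis by (cases "b k") (auto simp: cantor_term_def)
qed

definition cantor_digits :: "real \<Rightarrow> nat \<Rightarrow> bool" where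
  "cantor_digits = inv cantor_point"

lemma cantor_digits_cantor_point [simp]: "cantor_digits (cantor_point b) = b"
  unfolding cantor_digits_def by (rule inv_f_f[OF inj_cantor_point])

lemma cantor_point_cantor_digits: "y \<in> cantor_set \<Longrightarrow> cantor_point (cantor_digits y) = y"
  unfolding cantor_digits_def cantor_set_eq_range by (simp add: f_inv_into_f)

lemma cantor_set_dist_less_imp_agree:
  "x \<in> cantor_set \<Longrightarrow> y \<in> cantor_set \<Longrightarrow> \<bar>x - y\<bar> < 1 / 3 ^ m \<Longrightarrow>
     \<forall>k<m. cantor_digits x k = cantor_digits y k"
  by (rule cantor_point_dist_less_imp_agree) (simp add: cantor_point_cantor_digits)

lemma cantor_set_agree_imp_dist_le:
  "x \<in> cantor_set \<Longrightarrow> y \<in> cantor_set \<Longrightarrow> \<forall>k<m. cantor_digits x k = cantor_digits y k \<Longrightarrow>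
     \<bar>x - y\<bar> \<le> 1 / 3 ^ m"
  using cantor_point_dist_le[of m "cantor_digits x" "cantor_digits y"]
  by (simp add: cantor_point_cantor_digits)

lemma cantor_set_dist_le_1: "x \<in> cantor_set \<Longrightarrow> y \<in> cantor_set \<Longrightarrow> \<bar>x - y\<bar> \<le> 1"
  using cantor_set_agree_imp_dist_le[of x y 0] by simp

text \<open>The Cantor set is the image of the compact space \<open>{0,1}\<^sup>\<nat>\<close> under the continuous map
  \<open>v \<mapsto> \<Sum>k. 2 v\<^sub>k / 3\<^sup>k\<^sup>+\<^sup>1\<close>, continuous by the Weierstrass M-test.\<close>
lemma compact_cantor_set: "compact cantor_set"
proof -
  define K where "K = PiE UNIV (\<lambda>_::nat. {0::real, 1})"
  define G where "G = (\<lambda>v::nat \<Rightarrow> real. \<Sum>k. 2 * v k / 3 ^ Suc k)"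
  have "compactin (product_topology (\<lambda>_. euclidean) UNIV) K"
    unfolding K_def compactin_PiE by (simp add: finite_imp_compact)
  then have "compact K" unfolding euclidean_product_topology by simp
  have "uniform_limit K (\<lambda>n v. \<Sum>k<n. 2 * v k / 3 ^ Suc k) G sequentially"
    unfolding G_def
  proof (rule Weierstrass_m_test[OF _ summable_cantor_weight])
    fix n and v :: "nat \<Rightarrow> real" assume "v \<in> K"
    then have "v n \<in> {0,1}" unfolding K_def by auto
    then show "norm (2 * v n / 3 ^ Suc n) \<le> 2 / 3 ^ Suc n" by auto
  qed
  moreover have "continuous_on K (\<lambda>v. \<Sum>k<n. 2 * v k / 3 ^ Suc k)" for n
    by (intro continuous_intros continuous_on_subset[OF continuous_on_product_coordinates]) auto
  ultimately have "continuous_on K G"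
    by (intro uniform_limit_theorem) (auto intro: always_eventually)
  with \<open>compact K\<close> have "compact (G ` K)" by (intro compact_continuous_image)
  moreover have "G ` K = cantor_set"
  proof -
    have "G ` K = (\<lambda>b. G (\<lambda>k. of_bool (b k))) ` UNIV"
    proof (intro equalityI subsetI)
      fix y assume "y \<in> G ` K"
      then obtain v where v: "v \<in> K" "y = G v" by blast
      have "v = (\<lambda>k. of_bool (v k = 1))"
        using v(1) unfolding K_def by (force simp: PiE_iff)
      then show "y \<in> (\<lambda>b. G (\<lambda>k. of_bool (b k))) ` UNIV" using v(2) by (metis rangeI)
    qed (auto simp: K_def)
    then show ?thesis
      unfolding cantor_set_eq_range G_def cantor_point_def cantor_term_def by simp
  qed
  ultimately show ?thesis by simp
qed

section \<open>The \<open>F\<^sub>\<sigma>\<close> and \<open>G\<^sub>\<delta>\<close> parts\<close>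

lemma Met_Metric_space: "d \<in> Met X \<Longrightarrow> Metric_space X d"
  and Met_mtopology: "d \<in> Met X \<Longrightarrow> Metric_space.mtopology X d = top_of_set X"
  unfolding Met_def by auto

lemma topspace_Met_topology: "topspace (Met_topology X) = Met X"
proof -
  have "openin (Met_topology X) (Met X)"
    unfolding openin_Met_topology Met_open_def by (simp add: exI[of _ "1::real"])
  moreover have "openin (Met_topology X) U \<Longrightarrow> U \<subseteq> Met X" for U
    unfolding openin_Met_topology Met_open_def by simp
  ultimately show ?thesis unfolding topspace_def by blast
qed

lemma DX_ge: "x \<in> X \<Longrightarrow> y \<in> X \<Longrightarrow> ereal \<bar>d x y - e x y\<bar> \<le> DX X d e"
  unfolding DX_def by (rule SUP_upper2[of "(x,y)"]) auto

lemma DX_less_imp_less: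
  assumes "DX X d e < ereal \<eta>" "x \<in> X" "y \<in> X"
  shows "\<bar>d x y - e x y\<bar> < \<eta>"
  using order.strict_trans1[OF DX_ge[OF assms(2,3)] assms(1)] by simp

lemma DX_less_of_bound:
  assumes "\<And>x y. x \<in> X \<Longrightarrow> y \<in> X \<Longrightarrow> \<bar>d x y - e x y\<bar> \<le> B" "B < \<epsilon>"
  shows "DX X d e < ereal \<epsilon>"
proof -
  have "DX X d e \<le> ereal B" unfolding DX_def by (rule SUP_least) (auto intro: assms(1))
  also have "\<dots> < ereal \<epsilon>" using assms(2) by simp
  finally show ?thesis .
qed

lemma less_mdiam_iff: "ereal r < mdiam X d \<longleftrightarrow> (\<exists>x\<in>X. \<exists>y\<in>X. r < d x y)"
  unfolding mdiam_def less_SUP_iff by auto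

lemma mdiam_le_of_bound: "(\<And>x y. x \<in> X \<Longrightarrow> y \<in> X \<Longrightarrow> d x y \<le> B) \<Longrightarrow> mdiam X d \<le> ereal B"
  unfolding mdiam_def by (rule SUP_least) auto

text \<open>Relaxing both inequalities by an arbitrary \<open>\<delta> > 0\<close> makes the condition closed in \<open>Met X\<close>,
  while changing the constant by at most a factor \<open>2\<close>.\<close>
definition approx_uniformly_perfect :: "real \<Rightarrow> 'a set \<Rightarrow> ('a \<Rightarrow> 'a \<Rightarrow> real) \<Rightarrow> bool" where
  "approx_uniformly_perfect c X d \<longleftrightarrow> (\<forall>x\<in>X. \<forall>r. 0 < r \<and> ereal r < mdiam X d \<longrightarrow>
      (\<forall>\<delta>>0. \<exists>y\<in>X. c * r - \<delta> \<le> d x y \<and> d x y \<le> r + \<delta>))"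

lemma c_uniformly_perfect_imp_approx:
  assumes "c_uniformly_perfect c X d" "0 \<le> c'" "c' \<le> c"
  shows "approx_uniformly_perfect c' X d"
  unfolding approx_uniformly_perfect_def
proof (intro ballI allI impI)
  fix x r and \<delta> :: real
  assume x: "x \<in> X" and r: "0 < r \<and> ereal r < mdiam X d" and "0 < \<delta>"
  then obtain y where "y \<in> X" "c * r \<le> d x y" "d x y \<le> r"
    using assms(1) unfolding c_uniformly_perfect_def by blast
  moreover have "c' * r \<le> c * r" using assms(3) r by (intro mult_right_mono) auto
  ultimately show "\<exists>y\<in>X. c' * r - \<delta> \<le> d x y \<and> d x y \<le> r + \<delta>"
    using \<open>0 < \<delta>\<close> by (intro bexI[of _ y]) auto
qed

text \<open>Apply the relaxed condition at radius \<open>3r/4\<close> with slack \<open>\<delta> = min (r/4) (c r/4)\<close>.\<close>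
lemma approx_uniformly_perfect_imp_half:
  assumes approx: "approx_uniformly_perfect c X d" and "0 < c"
  shows "c_uniformly_perfect (c/2) X d"
  unfolding c_uniformly_perfect_def
proof (intro ballI allI impI)
  fix x r assume x: "x \<in> X" and r: "0 < r \<and> ereal r < mdiam X d"
  have less: "ereal (3*r/4) < ereal r" using r by simp
  have r': "0 < 3*r/4 \<and> ereal (3*r/4) < mdiam X d" using r order.strict_trans[OF less] by auto
  have "0 < min (r/4) (c*r/4)" using r \<open>0 < c\<close> by simp
  then obtain y where y: "y \<in> X" "c * (3*r/4) - min (r/4) (c*r/4) \<le> d x y"
      "d x y \<le> 3*r/4 + min (r/4) (c*r/4)"
    using approx x r' unfolding approx_uniformly_perfect_def by blast
  have "c/2 * r = c * (3*r/4) - c*r/4" by (simp add: field_simps)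
  then have "c/2 * r \<le> d x y \<and> d x y \<le> r" using y(2,3) by linarith
  then show "\<exists>y\<in>X. c / 2 * r \<le> d x y \<and> d x y \<le> r" using y(1) by blast
qed

text \<open>A failure of the relaxed condition at \<open>(x, r, \<delta>)\<close> persists under perturbations of size
  \<open>min (\<delta>/2) (d p q - r)\<close>, where \<open>d p q > r\<close> witnesses \<open>r < diam\<close>.\<close>
lemma not_approx_uniformly_perfect_near:
  assumes not_approx: "\<not> approx_uniformly_perfect c X d"
  shows "\<exists>\<epsilon>>0. \<forall>e\<in>Met X. DX X d e < ereal \<epsilon> \<longrightarrow> \<not> approx_uniformly_perfect c X e"
proof -
  obtain x r \<delta> where x: "x \<in> X" and r: "0 < r" "ereal r < mdiam X d" and \<delta>: "\<delta> > 0"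
    and no: "\<forall>y\<in>X. \<not> (c * r - \<delta> \<le> d x y \<and> d x y \<le> r + \<delta>)"
    using not_approx unfolding approx_uniformly_perfect_def by blast
  obtain p q where pq: "p \<in> X" "q \<in> X" "r < d p q" using r(2) unfolding less_mdiam_iff by blast
  define \<eta> where "\<eta> = min (\<delta>/2) (d p q - r)"
  have "\<not> approx_uniformly_perfect c X e" if e: "DX X d e < ereal \<eta>" for e
  proof
    assume approx: "approx_uniformly_perfect c X e"
    have "r < e p q" using DX_less_imp_less[OF e pq(1,2)] unfolding \<eta>_def by linarith
    then have "ereal r < mdiam X e" unfolding less_mdiam_iff using pq(1,2) by blast
    moreover have "\<delta>/2 > 0" using \<delta> by simp
    ultimately obtain y where y: "y \<in> X" "c * r - \<delta>/2 \<le> e x y" "e x y \<le> r + \<delta>/2"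
      using approx x r(1) unfolding approx_uniformly_perfect_def by blast
    have "\<bar>d x y - e x y\<bar> < \<delta>/2"
      using DX_less_imp_less[OF e x y(1)] unfolding \<eta>_def by linarith
    then have "c * r - \<delta> \<le> d x y \<and> d x y \<le> r + \<delta>" using y(2,3) by linarith
    with no y(1) show False by blast
  qed
  moreover have "\<eta> > 0" unfolding \<eta>_def using \<delta> pq by simp
  ultimately show ?thesis by blast
qed

lemma closedin_approx_uniformly_perfect:
  "closedin (Met_topology X) {d \<in> Met X. approx_uniformly_perfect c X d}"
proof -
  have "openin (Met_topology X) (Met X - {d \<in> Met X. approx_uniformly_perfect c X d})"
    unfolding openin_Met_topology Met_open_def
  proof (intro conjI ballI)
    fix d assume "d \<in> Met X - {d \<in> Met X. approx_uniformly_perfect c X d}"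
    then show "\<exists>\<epsilon>>0. \<forall>e\<in>Met X. DX X d e < ereal \<epsilon> \<longrightarrow> e \<in> Met X - {d \<in> Met X. approx_uniformly_perfect c X d}"
      using not_approx_uniformly_perfect_near[of c X d] by blast
  qed blast
  then show ?thesis unfolding closedin_def topspace_Met_topology by auto
qed

lemma uniformly_perfect_eq_Union_approx:
  "{d \<in> Met X. uniformly_perfect X d} =
     (\<Union>n. {d \<in> Met X. approx_uniformly_perfect (1 / Suc (Suc n)) X d})"
proof (intro equalityI subsetI)
  fix d assume "d \<in> {d \<in> Met X. uniformly_perfect X d}"
  then obtain c where d: "d \<in> Met X" "0 < c" "c_uniformly_perfect c X d"
    unfolding uniformly_perfect_def by blast
  obtain n where "inverse (real (Suc n)) < c" using reals_Archimedean[OF d(2)] by blast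
  moreover have "1 / real (Suc (Suc n)) \<le> inverse (real (Suc n))" by (simp add: divide_simps)
  ultimately have "approx_uniformly_perfect (1 / Suc (Suc n)) X d"
    by (intro c_uniformly_perfect_imp_approx[OF d(3)]) auto
  then show "d \<in> (\<Union>n. {d \<in> Met X. approx_uniformly_perfect (1 / Suc (Suc n)) X d})"
    using d(1) by blast
next
  fix d assume "d \<in> (\<Union>n. {d \<in> Met X. approx_uniformly_perfect (1 / Suc (Suc n)) X d})"
  then obtain n where d: "d \<in> Met X" "approx_uniformly_perfect (1 / Suc (Suc n)) X d" by blast
  have "c_uniformly_perfect (1 / Suc (Suc n) / 2) X d"
    by (rule approx_uniformly_perfect_imp_half[OF d(2)]) simp
  moreover have "0 < 1 / real (Suc (Suc n)) / 2" "1 / real (Suc (Suc n)) / 2 < 1"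
    by (auto simp: divide_simps)
  ultimately show "d \<in> {d \<in> Met X. uniformly_perfect X d}"
    using d(1) unfolding uniformly_perfect_def by blast
qed

lemma fsigma_in_uniformly_perfect:
  "fsigma_in (Met_topology X) {d \<in> Met X. uniformly_perfect X d}"
  unfolding uniformly_perfect_eq_Union_approx
  by (rule fsigma_in_Union) (auto intro: closed_imp_fsigma_in closedin_approx_uniformly_perfect)

lemma gdelta_in_not_uniformly_perfect:
  "gdelta_in (Met_topology X) {d \<in> Met X. \<not> uniformly_perfect X d}"
proof -
  have "Met X - {d \<in> Met X. \<not> uniformly_perfect X d} = {d \<in> Met X. uniformly_perfect X d}"
    by blast
  then show ?thesis
    unfolding gdelta_in_fsigma_in topspace_Met_topology using fsigma_in_uniformly_perfect by auto
qed

lemma closure_of_Met_eq_topspace: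
  assumes approx: "\<And>d \<epsilon>. d \<in> Met X \<Longrightarrow> \<epsilon> > 0 \<Longrightarrow> \<exists>e\<in>Met X. P e \<and> DX X d e < ereal \<epsilon>"
  shows "Met_topology X closure_of {d \<in> Met X. P d} = topspace (Met_topology X)"
  unfolding dense_intersects_open
proof (intro allI impI)
  fix T assume T: "openin (Met_topology X) T \<and> T \<noteq> {}"
  then obtain d where d: "d \<in> T" by blast
  have "Met_open X T" using T openin_Met_topology by blast
  then obtain \<epsilon> where "d \<in> Met X" "\<epsilon> > 0" "\<forall>e\<in>Met X. DX X d e < ereal \<epsilon> \<longrightarrow> e \<in> T"
    using d unfolding Met_open_def by blast
  with approx show "{d \<in> Met X. P d} \<inter> T \<noteq> {}" by blast
qed

section \<open>Metrics compatible with a subspace of a metric space\<close>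

lemma mtopology_eq_top_of_set_iff:
  fixes M :: "'a::metric_space set"
  assumes m: "Metric_space M e"
  shows "Metric_space.mtopology M e = top_of_set M \<longleftrightarrow>
    (\<forall>x\<in>M. \<forall>\<epsilon>>0. (\<exists>\<delta>>0. \<forall>y\<in>M. dist y x < \<delta> \<longrightarrow> e x y < \<epsilon>)
                 \<and> (\<exists>\<delta>>0. \<forall>y\<in>M. e x y < \<delta> \<longrightarrow> dist y x < \<epsilon>))"
    (is "?L \<longleftrightarrow> ?R")
proof
  assume L: ?L
  show ?R
  proof (intro ballI allI impI conjI)
    fix x and \<epsilon> :: real assume x: "x \<in> M" and \<epsilon>: "\<epsilon> > 0"
    have "openin (top_of_set M) (Metric_space.mball M e x \<epsilon>)"
      using Metric_space.openin_mball[OF m] L by metis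
    moreover have "x \<in> Metric_space.mball M e x \<epsilon>"
      using x \<epsilon> Metric_space.centre_in_mball_iff[OF m] by blast
    ultimately obtain \<delta> where "\<delta> > 0" "\<forall>y\<in>M. dist y x < \<delta> \<longrightarrow> y \<in> Metric_space.mball M e x \<epsilon>"
      unfolding openin_euclidean_subtopology_iff by blast
    then show "\<exists>\<delta>>0. \<forall>y\<in>M. dist y x < \<delta> \<longrightarrow> e x y < \<epsilon>"
      using Metric_space.in_mball[OF m] by auto
  next
    fix x and \<epsilon> :: real assume x: "x \<in> M" and \<epsilon>: "\<epsilon> > 0"
    have "openin (top_of_set M) (M \<inter> ball x \<epsilon>)"
      by (simp add: openin_open_Int)
    then have "openin (Metric_space.mtopology M e) (M \<inter> ball x \<epsilon>)" using L by simp
    moreover have "x \<in> M \<inter> ball x \<epsilon>" using x \<epsilon> by simp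
    ultimately obtain r where "r > 0" "Metric_space.mball M e x r \<subseteq> M \<inter> ball x \<epsilon>"
      unfolding Metric_space.openin_mtopology[OF m] by blast
    then show "\<exists>\<delta>>0. \<forall>y\<in>M. e x y < \<delta> \<longrightarrow> dist y x < \<epsilon>"
      using x Metric_space.in_mball[OF m] by (intro exI[of _ r]) (auto simp: dist_commute)
  qed
next
  assume R: ?R
  show ?L
  proof (subst topology_eq, intro allI iffI)
    fix U assume U: "openin (Metric_space.mtopology M e) U"
    then have UM: "U \<subseteq> M" using Metric_space.openin_mtopology[OF m] by blast
    show "openin (top_of_set M) U"
      unfolding openin_euclidean_subtopology_iff
    proof (intro conjI ballI UM)
      fix x assume x: "x \<in> U"
      then obtain r where r: "r > 0" "Metric_space.mball M e x r \<subseteq> U"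
        using U Metric_space.openin_mtopology[OF m] by blast
      obtain \<delta> where "\<delta> > 0" "\<forall>y\<in>M. dist y x < \<delta> \<longrightarrow> e x y < r" using R x UM r(1) by blast
      then show "\<exists>\<delta>>0. \<forall>y\<in>M. dist y x < \<delta> \<longrightarrow> y \<in> U"
        using r(2) x UM Metric_space.in_mball[OF m] by blast
    qed
  next
    fix U assume U: "openin (top_of_set M) U"
    then have UM: "U \<subseteq> M" by (rule openin_subset[of "top_of_set M", simplified])
    show "openin (Metric_space.mtopology M e) U"
      unfolding Metric_space.openin_mtopology[OF m]
    proof (intro conjI allI impI UM)
      fix x assume x: "x \<in> U"
      then obtain r where r: "r > 0" "\<forall>y\<in>M. dist y x < r \<longrightarrow> y \<in> U"
        using U unfolding openin_euclidean_subtopology_iff by blast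
      obtain \<delta> where "\<delta> > 0" "\<forall>y\<in>M. e x y < \<delta> \<longrightarrow> dist y x < r" using R x UM r(1) by blast
      then show "\<exists>\<delta>>0. Metric_space.mball M e x \<delta> \<subseteq> U"
        using r(2) Metric_space.in_mball[OF m] by blast
    qed
  qed
qed

lemma Met_iff:
  fixes X :: "'a::metric_space set"
  shows "e \<in> Met X \<longleftrightarrow> Metric_space X e \<and> (\<forall>x y. x \<notin> X \<or> y \<notin> X \<longrightarrow> e x y = 0) \<and>
    (\<forall>x\<in>X. \<forall>\<epsilon>>0. (\<exists>\<delta>>0. \<forall>y\<in>X. dist y x < \<delta> \<longrightarrow> e x y < \<epsilon>)
                 \<and> (\<exists>\<delta>>0. \<forall>y\<in>X. e x y < \<delta> \<longrightarrow> dist y x < \<epsilon>))"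
  unfolding Met_def using mtopology_eq_top_of_set_iff by blast

lemma Met_continuous_on:
  fixes X :: "'a::metric_space set"
  assumes "d \<in> Met X"
  shows "continuous_on (X \<times> X) (\<lambda>(x, y). d x y)"
proof -
  interpret Metric_space X d by (rule Met_Metric_space[OF assms])
  have "continuous_map (prod_topology mtopology mtopology) euclidean (\<lambda>(x, y). d x y)"
    using continuous_map_metric[of "metric (X, d)"] by simp
  then show ?thesis
    unfolding Met_mtopology[OF assms] prod_topology_subtopology_eu continuous_map_iff_continuous .
qed

lemma Met_uniformly_small:
  fixes X :: "'a::metric_space set"
  assumes "compact X" "d \<in> Met X" "\<eta> > 0"
  shows "\<exists>\<delta>>0. \<forall>x\<in>X. \<forall>y\<in>X. dist x y < \<delta> \<longrightarrow> d x y < \<eta>"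
proof -
  have "uniformly_continuous_on (X \<times> X) (\<lambda>(x, y). d x y)"
    using assms(1,2) by (intro compact_uniformly_continuous Met_continuous_on compact_Times)
  then obtain \<delta> where \<delta>: "\<delta> > 0" "\<forall>p\<in>X \<times> X. \<forall>q\<in>X \<times> X.
       dist q p < \<delta> \<longrightarrow> dist ((\<lambda>(x, y). d x y) q) ((\<lambda>(x, y). d x y) p) < \<eta>"
    unfolding uniformly_continuous_on_def using assms(3) by blast
  have "d x y < \<eta>" if "x \<in> X" "y \<in> X" "dist x y < \<delta>" for x y
  proof -
    have "dist (d x y) (d y y) < \<eta>"
      using \<delta>(2) that by (force simp: dist_Pair_Pair)
    then show ?thesis
      using Metric_space.mdist_zero[OF Met_Metric_space[OF assms(2)] that(2)] by (simp add: dist_real_def)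
  qed
  with \<delta>(1) show ?thesis by blast
qed

lemma Met_bounded:
  fixes X :: "'a::metric_space set"
  assumes "compact X" "d \<in> Met X"
  obtains B where "\<And>x y. x \<in> X \<Longrightarrow> y \<in> X \<Longrightarrow> d x y \<le> B"
proof -
  obtain B where B: "\<And>p. p \<in> X \<times> X \<Longrightarrow> norm ((\<lambda>(x, y). d x y) p) \<le> B"
    using continuous_on_compact_bound[OF compact_Times[OF assms(1) assms(1)] Met_continuous_on[OF assms(2)]]
    by blast
  have "d x y \<le> B" if "x \<in> X" "y \<in> X" for x y
    using B[of "(x, y)"] that by simp
  then show ?thesis by (rule that)
qed

lemma Met_max_abs_diff:
  fixes X :: "'a::metric_space set"
  assumes d: "d \<in> Met X" and f: "continuous_on X f"
  shows "(\<lambda>x y. if x \<in> X \<and> y \<in> X then max (d x y) \<bar>f x - f y\<bar> else 0) \<in> Met X"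
    (is "?e \<in> _")
proof -
  have m: "Metric_space X d" by (rule Met_Metric_space[OF d])
  have "Metric_space X ?e"
  proof
    fix x y z assume "x \<in> X" "y \<in> X" "z \<in> X"
    then show "?e x z \<le> ?e x y + ?e y z"
      using Metric_space.triangle[OF m, of x y z] by (simp add: max_def) linarith
  next
    fix x y assume "x \<in> X" "y \<in> X"
    then show "?e x y = 0 \<longleftrightarrow> x = y"
      using Metric_space.zero[OF m, of x y] Metric_space.nonneg[OF m, of x y] by (auto simp: max_def)
  qed (auto simp: Metric_space.commute[OF m] abs_minus_commute max_def)
  moreover have "\<exists>\<delta>>0. \<forall>y\<in>X. dist y x < \<delta> \<longrightarrow> ?e x y < \<epsilon>"
    if x: "x \<in> X" and \<epsilon>: "\<epsilon> > 0" for x \<epsilon>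
  proof -
    obtain \<delta>1 where "\<delta>1 > 0" "\<forall>y\<in>X. dist y x < \<delta>1 \<longrightarrow> d x y < \<epsilon>"
      using d x \<epsilon> unfolding Met_iff by blast
    moreover obtain \<delta>2 where "\<delta>2 > 0" "\<forall>y\<in>X. dist y x < \<delta>2 \<longrightarrow> dist (f y) (f x) < \<epsilon>"
      using f x \<epsilon> unfolding continuous_on_iff by blast
    ultimately show ?thesis
      using x by (intro exI[of _ "min \<delta>1 \<delta>2"]) (auto simp: dist_real_def abs_minus_commute)
  qed
  moreover have "\<exists>\<delta>>0. \<forall>y\<in>X. ?e x y < \<delta> \<longrightarrow> dist y x < \<epsilon>"
    if x: "x \<in> X" and \<epsilon>: "\<epsilon> > 0" for x \<epsilon>
  proof -
    obtain \<delta> where "\<delta> > 0" "\<forall>y\<in>X. d x y < \<delta> \<longrightarrow> dist y x < \<epsilon>"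
      using d x \<epsilon> unfolding Met_iff by blast
    then show ?thesis using x by (intro exI[of _ \<delta>]) auto
  qed
  ultimately show ?thesis unfolding Met_iff by auto
qed

section \<open>Density of uniformly perfect metrics\<close>

lemma ex_power_bracket:
  fixes q r a :: real
  assumes "1 < q" "0 < r" "r < a"
  shows "\<exists>j. a / q ^ Suc j \<le> r \<and> r < a / q ^ j"
proof -
  obtain n where "a / r < q ^ n" using real_arch_pow[OF assms(1)] by blast
  then have ex: "\<exists>n. a / q ^ n \<le> r"
    using assms by (intro exI[of _ n]) (simp add: field_simps)
  define n where "n = (LEAST n. a / q ^ n \<le> r)"
  have n: "a / q ^ n \<le> r" unfolding n_def by (rule LeastI_ex[OF ex])
  have "n \<noteq> 0"
  proof
    assume "n = 0"
    then show False using n assms(3) by simp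
  qed
  then obtain j where j: "n = Suc j" using not0_implies_Suc by blast
  then have "\<not> a / q ^ j \<le> r" using not_less_Least[of j "\<lambda>n. a / q ^ n \<le> r"] by (simp add: n_def)
  then show ?thesis using n j by auto
qed

text \<open>Inside each cylinder of level \<open>m\<close> the new metric is a rescaled Euclidean distance,
  uniformly perfect because flipping a digit of index \<open>k \<ge> m\<close> moves a point by exactly
  \<open>2/3^(k+1)\<close>; between different cylinders it is \<open>d\<close> between canonical representatives
  plus a gap \<open>\<epsilon>/4\<close>.\<close>
locale cylinder_collapse =
  fixes d :: "real \<Rightarrow> real \<Rightarrow> real" and \<epsilon> :: real and m :: nat
  assumes d: "d \<in> Met cantor_set" and \<epsilon>: "\<epsilon> > 0"
    and d_small: "\<And>x y. x \<in> cantor_set \<Longrightarrow> y \<in> cantor_set \<Longrightarrow> \<bar>x - y\<bar> \<le> 1 / 3 ^ m \<Longrightarrow> d x y < \<epsilon>/4"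
begin

definition same_cylinder :: "real \<Rightarrow> real \<Rightarrow> bool" where
  "same_cylinder x y \<longleftrightarrow> (\<forall>k<m. cantor_digits x k = cantor_digits y k)"

definition cylinder_rep :: "real \<Rightarrow> real" where
  "cylinder_rep x = cantor_point (\<lambda>k. k < m \<and> cantor_digits x k)"

definition collapsed :: "real \<Rightarrow> real \<Rightarrow> real" where
  "collapsed x y = (if x \<in> cantor_set \<and> y \<in> cantor_set then
     (if same_cylinder x y then \<epsilon>/4 * \<bar>x - y\<bar> else d (cylinder_rep x) (cylinder_rep y) + \<epsilon>/4)
   else 0)"

lemma Metric_space_d: "Metric_space cantor_set d" by (rule Met_Metric_space[OF d])

lemma same_cylinder_refl: "same_cylinder x x"
  and same_cylinder_sym: "same_cylinder x y \<Longrightarrow> same_cylinder y x"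
  and same_cylinder_trans: "same_cylinder x y \<Longrightarrow> same_cylinder y z \<Longrightarrow> same_cylinder x z"
  unfolding same_cylinder_def by simp_all

lemma cylinder_rep_in: "cylinder_rep x \<in> cantor_set"
  unfolding cylinder_rep_def by simp

lemma same_cylinder_rep: "same_cylinder x (cylinder_rep x)"
  unfolding same_cylinder_def cylinder_rep_def by simp

lemma cylinder_rep_eq: "same_cylinder x y \<Longrightarrow> cylinder_rep x = cylinder_rep y"
  unfolding same_cylinder_def cylinder_rep_def by (metis (mono_tags, lifting))

lemma same_cylinder_imp_d_small:
  "x \<in> cantor_set \<Longrightarrow> y \<in> cantor_set \<Longrightarrow> same_cylinder x y \<Longrightarrow> d x y < \<epsilon>/4"
  using d_small cantor_set_agree_imp_dist_le unfolding same_cylinder_def by blast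

lemma close_imp_same_cylinder:
  "x \<in> cantor_set \<Longrightarrow> y \<in> cantor_set \<Longrightarrow> \<bar>x - y\<bar> < 1 / 3 ^ m \<Longrightarrow> same_cylinder x y"
  using cantor_set_dist_less_imp_agree unfolding same_cylinder_def by blast

lemma collapsed_same:
  "x \<in> cantor_set \<Longrightarrow> y \<in> cantor_set \<Longrightarrow> same_cylinder x y \<Longrightarrow> collapsed x y = \<epsilon>/4 * \<bar>x - y\<bar>"
  unfolding collapsed_def by simp

lemma collapsed_different:
  "x \<in> cantor_set \<Longrightarrow> y \<in> cantor_set \<Longrightarrow> \<not> same_cylinder x y \<Longrightarrow>
     collapsed x y = d (cylinder_rep x) (cylinder_rep y) + \<epsilon>/4"
  unfolding collapsed_def by simp

lemma collapsed_nonneg: "0 \<le> collapsed x y"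
  unfolding collapsed_def using \<epsilon> Metric_space.nonneg[OF Metric_space_d] by auto

lemma collapsed_different_ge:
  "x \<in> cantor_set \<Longrightarrow> y \<in> cantor_set \<Longrightarrow> \<not> same_cylinder x y \<Longrightarrow> \<epsilon>/4 \<le> collapsed x y"
  using collapsed_different Metric_space.nonneg[OF Metric_space_d] by fastforce

lemma collapsed_same_le:
  "x \<in> cantor_set \<Longrightarrow> y \<in> cantor_set \<Longrightarrow> same_cylinder x y \<Longrightarrow> collapsed x y \<le> \<epsilon>/4"
  using collapsed_same cantor_set_dist_le_1 \<epsilon> by (simp add: mult_left_le)

lemma Metric_space_collapsed: "Metric_space cantor_set collapsed"
proof
  show "0 \<le> collapsed x y" for x y by (rule collapsed_nonneg)
  show "collapsed x y = collapsed y x" for x y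
    unfolding collapsed_def using same_cylinder_sym Metric_space.commute[OF Metric_space_d]
    by (auto simp: abs_minus_commute)
  show "collapsed x y = 0 \<longleftrightarrow> x = y" if "x \<in> cantor_set" "y \<in> cantor_set" for x y
    using that collapsed_same[OF that] collapsed_different_ge[OF that] same_cylinder_refl \<epsilon>
    by (cases "same_cylinder x y") force+
  show "collapsed x z \<le> collapsed x y + collapsed y z"
    if xyz: "x \<in> cantor_set" "y \<in> cantor_set" "z \<in> cantor_set" for x y z
  proof (cases "same_cylinder x z")
    case sxz: True
    show ?thesis
    proof (cases "same_cylinder x y")
      case sxy: True
      then have syz: "same_cylinder y z" using same_cylinder_trans same_cylinder_sym sxz by blast
      have "\<epsilon>/4 * \<bar>x - z\<bar> \<le> \<epsilon>/4 * \<bar>x - y\<bar> + \<epsilon>/4 * \<bar>y - z\<bar>"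
        using \<epsilon> by (simp add: distrib_left[symmetric] mult_left_mono)
      then show ?thesis
        using collapsed_same[OF xyz(1,3) sxz] collapsed_same[OF xyz(1,2) sxy] collapsed_same[OF xyz(2,3) syz]
        by simp
    next
      case sxy: False
      then show ?thesis
        using collapsed_same_le[OF xyz(1,3) sxz] collapsed_different_ge[OF xyz(1,2) sxy]
          collapsed_nonneg[of y z] by linarith
    qed
  next
    case sxz: False
    let ?r = cylinder_rep
    have "d (?r x) (?r z) \<le> d (?r x) (?r y) + d (?r y) (?r z)"
      by (rule Metric_space.triangle[OF Metric_space_d cylinder_rep_in cylinder_rep_in cylinder_rep_in])
    then show ?thesis
      using collapsed_different[OF xyz(1,3) sxz] collapsed_different[of x y] collapsed_different[of y z]
        collapsed_nonneg[of x y] collapsed_nonneg[of y z] cylinder_rep_eq[of x y] cylinder_rep_eq[of y z]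
        same_cylinder_trans[of x y z] sxz xyz \<epsilon>
      by (cases "same_cylinder x y"; cases "same_cylinder y z") auto
  qed
qed

lemma collapsed_in_Met: "collapsed \<in> Met cantor_set"
  unfolding Met_iff dist_real_def
proof (intro conjI ballI allI impI Metric_space_collapsed)
  fix x and \<eta> :: real assume x: "x \<in> cantor_set" and \<eta>: "\<eta> > 0"
  show "\<exists>\<delta>>0. \<forall>y\<in>cantor_set. \<bar>y - x\<bar> < \<delta> \<longrightarrow> collapsed x y < \<eta>"
  proof (intro exI[of _ "min (1/3^m) (\<eta> / (\<epsilon>/4))"] conjI ballI impI)
    fix y assume y: "y \<in> cantor_set" "\<bar>y - x\<bar> < min (1/3^m) (\<eta> / (\<epsilon>/4))"
    then have "collapsed x y = \<epsilon>/4 * \<bar>x - y\<bar>"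
      using close_imp_same_cylinder[OF x y(1)] collapsed_same[OF x y(1)] by (simp add: abs_minus_commute)
    also have "\<dots> < \<epsilon>/4 * (\<eta> / (\<epsilon>/4))"
      using y(2) \<epsilon> by (intro mult_strict_left_mono) (auto simp: abs_minus_commute)
    finally show "collapsed x y < \<eta>" using \<epsilon> by simp
  qed (use \<eta> \<epsilon> in simp)
  show "\<exists>\<delta>>0. \<forall>y\<in>cantor_set. collapsed x y < \<delta> \<longrightarrow> \<bar>y - x\<bar> < \<eta>"
  proof (intro exI[of _ "min (\<epsilon>/4) (\<epsilon>/4 * \<eta>)"] conjI ballI impI)
    fix y assume y: "y \<in> cantor_set" "collapsed x y < min (\<epsilon>/4) (\<epsilon>/4 * \<eta>)"
    then have "same_cylinder x y" using collapsed_different_ge[OF x y(1)] by force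
    then have "\<epsilon>/4 * \<bar>x - y\<bar> < \<epsilon>/4 * \<eta>" using collapsed_same[OF x y(1)] y(2) by simp
    then show "\<bar>y - x\<bar> < \<eta>" using \<epsilon> by (simp add: abs_minus_commute)
  qed (use \<eta> \<epsilon> in simp)
qed (auto simp: collapsed_def)

lemma DX_collapsed_less: "DX cantor_set d collapsed < ereal \<epsilon>"
proof (rule DX_less_of_bound)
  fix x y assume xy: "x \<in> cantor_set" "y \<in> cantor_set"
  show "\<bar>d x y - collapsed x y\<bar> \<le> 3*\<epsilon>/4"
  proof (cases "same_cylinder x y")
    case True
    then show ?thesis
      using same_cylinder_imp_d_small[OF xy True] collapsed_same_le[OF xy True]
        collapsed_nonneg[of x y] Metric_space.nonneg[OF Metric_space_d, of x y] by linarith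
  next
    case False
    let ?r = cylinder_rep
    have "d x (?r x) < \<epsilon>/4" "d y (?r y) < \<epsilon>/4"
      using same_cylinder_imp_d_small[OF _ cylinder_rep_in same_cylinder_rep] xy by auto
    moreover have "d x y \<le> d x (?r x) + d (?r x) (?r y) + d (?r y) y"
      using Metric_space.triangle[OF Metric_space_d xy(1) cylinder_rep_in[of x] xy(2)]
        Metric_space.triangle[OF Metric_space_d cylinder_rep_in[of x] cylinder_rep_in[of y] xy(2)] by linarith
    moreover have "d (?r x) (?r y) \<le> d (?r x) x + d x y + d y (?r y)"
      using Metric_space.triangle[OF Metric_space_d cylinder_rep_in[of x] xy(1) cylinder_rep_in[of y]]
        Metric_space.triangle[OF Metric_space_d xy(1) xy(2) cylinder_rep_in[of y]] by linarith
    moreover have "d (?r x) x = d x (?r x)" "d (?r y) y = d y (?r y)"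
      using Metric_space.commute[OF Metric_space_d] by auto
    ultimately show ?thesis using collapsed_different[OF xy False] \<epsilon> by linarith
  qed
qed (use \<epsilon> in simp)

definition flip_dist :: "nat \<Rightarrow> real" where
  "flip_dist k = \<epsilon>/4 * (2 / 3 ^ Suc k)"

lemma flip_dist_pos: "0 < flip_dist k"
  unfolding flip_dist_def using \<epsilon> by simp

lemma flip_dist_add: "flip_dist (m + j) = flip_dist m / 3 ^ j"
  unfolding flip_dist_def by (simp add: power_add)

lemma ex_collapsed_eq_flip_dist:
  assumes x: "x \<in> cantor_set" and k: "m \<le> k"
  shows "\<exists>y\<in>cantor_set. collapsed x y = flip_dist k"
proof -
  define y where "y = cantor_point ((cantor_digits x)(k := \<not> cantor_digits x k))"
  have y: "y \<in> cantor_set" unfolding y_def by simp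
  have "same_cylinder x y" unfolding same_cylinder_def y_def using k by simp
  moreover have "\<bar>x - y\<bar> = 2 / 3 ^ Suc k"
    using cantor_point_flip_dist[of "cantor_digits x" k] cantor_point_cantor_digits[OF x]
    unfolding y_def by (simp add: abs_minus_commute)
  ultimately have "collapsed x y = flip_dist k" using collapsed_same[OF x y] unfolding flip_dist_def by simp
  then show ?thesis using y by blast
qed

text \<open>Large radii are served by the flip at index \<open>m\<close> (the diameter is bounded by some \<open>M\<close>),
  small radii by the flip whose distance lies in \<open>(r/3, r]\<close>.\<close>
lemma uniformly_perfect_collapsed: "uniformly_perfect cantor_set collapsed"
proof -
  obtain B where B: "\<And>x y. x \<in> cantor_set \<Longrightarrow> y \<in> cantor_set \<Longrightarrow> d x y \<le> B"
    using Met_bounded[OF compact_cantor_set d] by blast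
  define M where "M = \<bar>B\<bar> + \<epsilon>"
  have M: "M > 0" unfolding M_def using \<epsilon> by simp
  have "collapsed x y \<le> M" if "x \<in> cantor_set" "y \<in> cantor_set" for x y
  proof -
    have "d (cylinder_rep x) (cylinder_rep y) \<le> \<bar>B\<bar>"
      using B[OF cylinder_rep_in cylinder_rep_in, of x y] by linarith
    then show ?thesis
      using collapsed_same_le[OF that] collapsed_different[OF that] \<epsilon>
      unfolding M_def by (cases "same_cylinder x y") auto
  qed
  then have diam: "mdiam cantor_set collapsed \<le> ereal M" by (rule mdiam_le_of_bound)
  define c where "c = min (1/3) (flip_dist m / M)"
  have c_le: "c \<le> 1/3" "c \<le> flip_dist m / M" unfolding c_def by (rule min.cobounded1, rule min.cobounded2)
  have "c_uniformly_perfect c cantor_set collapsed"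
    unfolding c_uniformly_perfect_def
  proof (intro ballI allI impI)
    fix x r assume x: "x \<in> cantor_set" and r: "0 < r \<and> ereal r < mdiam cantor_set collapsed"
    then have "ereal r < ereal M" using diam by (meson order.strict_trans2)
    then have "r < M" by simp
    show "\<exists>y\<in>cantor_set. c * r \<le> collapsed x y \<and> collapsed x y \<le> r"
    proof (cases "flip_dist m \<le> r")
      case True
      obtain y where y: "y \<in> cantor_set" "collapsed x y = flip_dist m"
        using ex_collapsed_eq_flip_dist[OF x order.refl] by blast
      have "c * r \<le> (flip_dist m / M) * r" using c_le r by (intro mult_right_mono) auto
      also have "\<dots> \<le> (flip_dist m / M) * M"
        by (rule mult_left_mono) (use \<open>r < M\<close> flip_dist_pos[of m] M in auto)
      also have "\<dots> = flip_dist m" using M by simp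
      finally have "c * r \<le> collapsed x y" using y(2) by simp
      moreover have "collapsed x y \<le> r" using y(2) True by simp
      ultimately show ?thesis using y(1) by blast
    next
      case False
      with r obtain j where j: "flip_dist m / 3 ^ Suc j \<le> r" "r < flip_dist m / 3 ^ j"
        using ex_power_bracket[of 3 r "flip_dist m"] by auto
      obtain y where y: "y \<in> cantor_set" "collapsed x y = flip_dist m / 3 ^ Suc j"
        using ex_collapsed_eq_flip_dist[OF x, of "m + Suc j"] unfolding flip_dist_add by auto
      have "c * r \<le> 1/3 * r" using c_le r by (intro mult_right_mono) auto
      also have "\<dots> < collapsed x y" using j(2) y(2) by simp
      finally have "c * r \<le> collapsed x y" by simp
      moreover have "collapsed x y \<le> r" using j(1) y(2) by simp
      ultimately show ?thesis using y(1) by blast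
    qed
  qed
  moreover have "0 < c" "c < 1" unfolding c_def using flip_dist_pos M by auto
  ultimately show ?thesis unfolding uniformly_perfect_def by blast
qed

end

lemma uniformly_perfect_Met_approx:
  assumes d: "d \<in> Met cantor_set" and \<epsilon>: "\<epsilon> > 0"
  shows "\<exists>e\<in>Met cantor_set. uniformly_perfect cantor_set e \<and> DX cantor_set d e < ereal \<epsilon>"
proof -
  obtain \<delta> where \<delta>: "\<delta> > 0" "\<forall>x\<in>cantor_set. \<forall>y\<in>cantor_set. dist x y < \<delta> \<longrightarrow> d x y < \<epsilon>/4"
    using Met_uniformly_small[OF compact_cantor_set d, of "\<epsilon>/4"] \<epsilon> by auto
  obtain m where m: "(1/3::real) ^ m < \<delta>" using real_arch_pow_inv[of \<delta> "1/3"] \<delta> by auto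
  interpret cylinder_collapse d \<epsilon> m
    using d \<epsilon> \<delta>(2) m by unfold_locales (auto simp: dist_real_def power_one_over)
  show ?thesis using collapsed_in_Met uniformly_perfect_collapsed DX_collapsed_less by blast
qed

section \<open>Density of non-uniformly perfect metrics\<close>

lemma cantor_point_zero: "cantor_point (\<lambda>_. False) = 0"
  by (simp add: cantor_point_def cantor_term_def)

lemma zero_in_cantor_set: "0 \<in> cantor_set"
  using cantor_point_in_cantor_set[of "\<lambda>_. False"] by (simp only: cantor_point_zero)

lemma cantor_digits_zero: "cantor_digits 0 = (\<lambda>_. False)"
  using cantor_digits_cantor_point[of "\<lambda>_. False"] by (simp only: cantor_point_zero)

definition first_one :: "real \<Rightarrow> nat" where
  "first_one y = (LEAST k. cantor_digits y k)"

lemma first_one_digit: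
  assumes "y \<in> cantor_set" "y \<noteq> 0"
  shows "cantor_digits y (first_one y)" "\<forall>k<first_one y. \<not> cantor_digits y k"
proof -
  have "\<exists>k. cantor_digits y k"
  proof (rule ccontr)
    assume "\<not> (\<exists>k. cantor_digits y k)"
    then have "cantor_digits y = (\<lambda>_. False)" by auto
    then show False using cantor_point_cantor_digits[OF assms(1)] assms(2) cantor_point_zero by simp
  qed
  then show "cantor_digits y (first_one y)" "\<forall>k<first_one y. \<not> cantor_digits y k"
    unfolding first_one_def using LeastI_ex not_less_Least by blast+
qed

lemma abs_le_first_one: "y \<in> cantor_set \<Longrightarrow> y \<noteq> 0 \<Longrightarrow> \<bar>y\<bar> \<le> 1 / 3 ^ first_one y"
  using cantor_set_agree_imp_dist_le[OF _ zero_in_cantor_set, of y "first_one y"] first_one_digit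
  by (simp add: cantor_digits_zero)

lemma first_one_locally_constant:
  assumes y: "y \<in> cantor_set" "y \<noteq> 0" and z: "z \<in> cantor_set" "\<bar>z - y\<bar> < 1 / 3 ^ Suc (first_one y)"
  shows "z \<noteq> 0 \<and> first_one z = first_one y"
proof -
  have agree: "\<forall>k<Suc (first_one y). cantor_digits z k = cantor_digits y k"
    using cantor_set_dist_less_imp_agree[OF z(1) y(1) z(2)] .
  then have "z \<noteq> 0" using first_one_digit(1)[OF y] cantor_digits_zero by auto
  moreover have "first_one z = first_one y"
    unfolding first_one_def[of z]
  proof (rule Least_equality)
    show "cantor_digits z (first_one y)" using agree first_one_digit(1)[OF y] by simp
    show "first_one y \<le> k" if "cantor_digits z k" for k
      using that agree first_one_digit(2)[OF y] by (meson less_SucI not_le)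
  qed
  ultimately show ?thesis by simp
qed

lemma first_one_ge:
  assumes "z \<in> cantor_set" "z \<noteq> 0" "\<bar>z\<bar> < 1 / 3 ^ n"
  shows "n \<le> first_one z"
proof (rule ccontr)
  assume "\<not> n \<le> first_one z"
  then have "cantor_digits z (first_one z) = cantor_digits 0 (first_one z)"
    using cantor_set_dist_less_imp_agree[OF assms(1) zero_in_cantor_set] assms(3) by simp
  then show False using first_one_digit[OF assms(1,2)] cantor_digits_zero by simp
qed

text \<open>The new metric is \<open>max d |height x - height y|\<close>, where \<open>height\<close> vanishes only at \<open>0\<close>, is
  locally constant elsewhere and, unless it equals \<open>sparse 0\<close>, takes a value \<open>sparse i\<close> dominating
  \<open>d 0 y\<close>.  So all distances from \<open>0\<close> lie in \<open>{0} \<union> {sparse i} \<union> [sparse 0, \<infinity>)\<close>, and the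
  ratios \<open>sparse (i+1) / sparse i \<rightarrow> 0\<close> rule out every uniform perfectness constant.\<close>
locale sparse_distances =
  fixes d :: "real \<Rightarrow> real \<Rightarrow> real" and \<epsilon> :: real
  assumes d: "d \<in> Met cantor_set" and \<epsilon>: "\<epsilon> > 0"
begin

definition sparse :: "nat \<Rightarrow> real" where
  "sparse j = (\<epsilon>/2) / 2 ^ (j * j)"

lemma sparse_pos: "0 < sparse j"
  unfolding sparse_def using \<epsilon> by simp

lemma sparse_Suc: "sparse (Suc j) = sparse j / 2 ^ (2 * j + 1)"
proof -
  have "Suc j * Suc j = j * j + (2 * j + 1)" by simp
  then show ?thesis unfolding sparse_def by (simp only: power_add) simp
qed

lemma sparse_antimono: "i \<le> j \<Longrightarrow> sparse j \<le> sparse i"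
  unfolding sparse_def using \<epsilon> by (intro divide_left_mono power_increasing) (auto intro: mult_le_mono)

lemma ex_sparse_less: "\<eta> > 0 \<Longrightarrow> \<exists>j. sparse j < \<eta>"
proof -
  assume \<eta>: "\<eta> > 0"
  obtain j where j: "(1/2::real) ^ j < \<eta> / (\<epsilon>/2)"
    using real_arch_pow_inv[of "\<eta> / (\<epsilon>/2)" "1/2"] \<eta> \<epsilon> by auto
  have "sparse j \<le> (\<epsilon>/2) / 2 ^ j"
    unfolding sparse_def using \<epsilon> by (intro divide_left_mono power_increasing) (auto simp: le_square)
  also have "\<dots> < \<eta>" using j \<epsilon> by (simp add: power_one_over field_simps)
  finally show ?thesis by blast
qed

lemma ex_sparse_ratio: "c > 0 \<Longrightarrow> \<exists>j. sparse (Suc j) < c * (sparse j / 2)"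
proof -
  assume c: "c > 0"
  obtain j where j: "(1/2::real) ^ j < c / 2" using real_arch_pow_inv[of "c/2" "1/2"] c by auto
  have "1 / (2::real) ^ (2 * j + 1) \<le> 1 / 2 ^ j" by (intro divide_left_mono power_increasing) auto
  then have "1 / (2::real) ^ (2 * j + 1) < c / 2" using j by (simp add: power_one_over)
  then have "sparse j * (1 / 2 ^ (2 * j + 1)) < sparse j * (c / 2)"
    using sparse_pos[of j] by (intro mult_strict_left_mono) auto
  then show ?thesis unfolding sparse_Suc by (intro exI[of _ j]) (simp add: mult.commute)
qed

definition bounded_near_0 :: "nat \<Rightarrow> nat \<Rightarrow> bool" where
  "bounded_near_0 n j \<longleftrightarrow> (\<forall>y\<in>cantor_set. \<bar>y\<bar> \<le> 1 / 3 ^ n \<longrightarrow> d 0 y \<le> sparse j)"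

lemma bounded_near_0_mono: "bounded_near_0 n j \<Longrightarrow> n \<le> n' \<Longrightarrow> bounded_near_0 n' j"
proof -
  assume "bounded_near_0 n j" "n \<le> n'"
  moreover have "(1::real) / 3 ^ n' \<le> 1 / 3 ^ n"
    using \<open>n \<le> n'\<close> by (intro divide_left_mono power_increasing) auto
  ultimately show "bounded_near_0 n' j" unfolding bounded_near_0_def by force
qed

lemma ex_bounded_near_0: "\<exists>n. bounded_near_0 n j"
proof -
  obtain \<delta> where \<delta>: "\<delta> > 0" "\<forall>y\<in>cantor_set. dist y 0 < \<delta> \<longrightarrow> d 0 y < sparse j"
    using d zero_in_cantor_set sparse_pos[of j] unfolding Met_iff by blast
  obtain n where "(1/3::real) ^ n < \<delta>" using real_arch_pow_inv[of \<delta> "1/3"] \<delta> by auto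
  then have "bounded_near_0 n j"
    unfolding bounded_near_0_def using \<delta>(2) by (force simp: power_one_over)
  then show ?thesis by blast
qed

text \<open>The bound \<open>j \<le> n\<close> only makes the maximum exist; \<open>depth n = 0\<close> carries no information.\<close>
definition depth :: "nat \<Rightarrow> nat" where
  "depth n = (GREATEST j. j \<le> n \<and> (j = 0 \<or> bounded_near_0 n j))"

lemma depth_le: "depth n \<le> n"
  and depth_bounded_near_0: "depth n \<noteq> 0 \<Longrightarrow> bounded_near_0 n (depth n)"
  using GreatestI_nat[of "\<lambda>j. j \<le> n \<and> (j = 0 \<or> bounded_near_0 n j)" 0 n]
  unfolding depth_def by auto

lemma depth_eventually_ge: "\<exists>n0. \<forall>n\<ge>n0. j \<le> depth n"
proof -
  obtain nj where "bounded_near_0 nj j" using ex_bounded_near_0 by blast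
  have "j \<le> depth n" if "max j nj \<le> n" for n
    unfolding depth_def using that bounded_near_0_mono[OF \<open>bounded_near_0 nj j\<close>, of n]
    by (intro Greatest_le_nat[of _ _ n]) auto
  then show ?thesis by blast
qed

definition height :: "real \<Rightarrow> real" where
  "height y = (if y = 0 then 0 else sparse (depth (first_one y)))"

lemma height_nonneg: "0 \<le> height y"
  and height_le: "height y \<le> sparse 0"
  unfolding height_def using sparse_pos sparse_antimono[of 0] by (auto simp: less_imp_le)

lemma continuous_on_height: "continuous_on cantor_set height"
  unfolding continuous_on_iff dist_real_def
proof (intro ballI allI impI)
  fix x and \<eta> :: real assume x: "x \<in> cantor_set" and \<eta>: "\<eta> > 0"
  show "\<exists>\<delta>>0. \<forall>y\<in>cantor_set. \<bar>y - x\<bar> < \<delta> \<longrightarrow> \<bar>height y - height x\<bar> < \<eta>"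
  proof (cases "x = 0")
    case False
    show ?thesis
      using first_one_locally_constant[OF x False] False \<eta>
      by (intro exI[of _ "1 / 3 ^ Suc (first_one x)"]) (auto simp: height_def)
  next
    case True
    obtain j where j: "sparse j < \<eta>" using ex_sparse_less[OF \<eta>] by blast
    obtain n0 where n0: "\<forall>n\<ge>n0. j \<le> depth n" using depth_eventually_ge by blast
    have "height y < \<eta>" if y: "y \<in> cantor_set" "y \<noteq> 0" "\<bar>y\<bar> < 1 / 3 ^ n0" for y
    proof -
      have "j \<le> depth (first_one y)" using n0 first_one_ge[OF y] by blast
      then show ?thesis using sparse_antimono j y(2) unfolding height_def by force
    qed
    then show ?thesis
      using True \<eta> height_nonneg by (intro exI[of _ "1 / 3 ^ n0"]) (auto simp: height_def)
  qed
qed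

definition sparse_metric :: "real \<Rightarrow> real \<Rightarrow> real" where
  "sparse_metric x y = (if x \<in> cantor_set \<and> y \<in> cantor_set then max (d x y) \<bar>height x - height y\<bar> else 0)"

lemma sparse_metric_in_Met: "sparse_metric \<in> Met cantor_set"
  unfolding sparse_metric_def by (rule Met_max_abs_diff[OF d continuous_on_height])

lemma DX_sparse_metric_less: "DX cantor_set d sparse_metric < ereal \<epsilon>"
proof (rule DX_less_of_bound)
  fix x y assume "x \<in> cantor_set" "y \<in> cantor_set"
  moreover have "\<bar>height x - height y\<bar> \<le> \<epsilon>/2"
    unfolding abs_le_iff using height_nonneg[of x] height_le[of x] height_nonneg[of y] height_le[of y]
    by (simp add: sparse_def)
  moreover have "0 \<le> d x y" by (rule Metric_space.nonneg[OF Met_Metric_space[OF d]])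
  ultimately show "\<bar>d x y - sparse_metric x y\<bar> \<le> \<epsilon>/2"
    unfolding sparse_metric_def using \<epsilon> by (simp add: max_def)
qed (use \<epsilon> in simp)

lemma sparse_metric_from_0:
  assumes y: "y \<in> cantor_set"
  shows "sparse_metric 0 y = 0 \<or> sparse 0 \<le> sparse_metric 0 y \<or> (\<exists>i. sparse_metric 0 y = sparse i)"
proof (cases "y = 0")
  case True
  then show ?thesis
    using Metric_space.mdist_zero[OF Met_Metric_space[OF sparse_metric_in_Met] zero_in_cantor_set] by simp
next
  case False
  let ?j = "depth (first_one y)"
  have e: "sparse_metric 0 y = max (d 0 y) (sparse ?j)"
    using y zero_in_cantor_set False sparse_pos[of ?j] unfolding sparse_metric_def height_def by simp
  show ?thesis
  proof (cases "?j = 0")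
    case True
    then show ?thesis unfolding e by simp
  next
    case j: False
    have "d 0 y \<le> sparse ?j"
      using depth_bounded_near_0[OF j] abs_le_first_one[OF y False] y unfolding bounded_near_0_def by blast
    then show ?thesis unfolding e by (intro disjI2 exI[of _ ?j]) (simp add: max_def)
  qed
qed

lemma not_uniformly_perfect_sparse_metric: "\<not> uniformly_perfect cantor_set sparse_metric"
proof
  assume "uniformly_perfect cantor_set sparse_metric"
  then obtain c where c: "0 < c" "c_uniformly_perfect c cantor_set sparse_metric"
    unfolding uniformly_perfect_def by blast
  obtain j where j: "sparse (Suc j) < c * (sparse j / 2)" using ex_sparse_ratio[OF c(1)] by blast
  define r where "r = sparse j / 2"
  have r: "0 < r" "r < sparse j" unfolding r_def using sparse_pos[of j] by auto
  define y1 where "y1 = cantor_point (\<lambda>k. k = 0)"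
  have "y1 \<noteq> 0"
  proof
    assume "y1 = 0"
    then have "(\<lambda>k::nat. k = 0) = (\<lambda>_. False)"
      unfolding y1_def cantor_point_zero[symmetric] by (rule injD[OF inj_cantor_point])
    then show False by (metis (full_types))
  qed
  then have y1: "y1 \<in> cantor_set" "y1 \<noteq> 0" unfolding y1_def by simp_all
  have "first_one y1 = 0" unfolding first_one_def y1_def by simp
  then have "height y1 = sparse 0" using y1 depth_le[of 0] unfolding height_def by simp
  then have "r < sparse_metric 0 y1"
    using y1 zero_in_cantor_set r sparse_antimono[of 0 j] unfolding sparse_metric_def height_def by simp
  then have "ereal r < mdiam cantor_set sparse_metric"
    unfolding less_mdiam_iff using y1(1) zero_in_cantor_set by blast
  then obtain y where y: "y \<in> cantor_set" "c * r \<le> sparse_metric 0 y" "sparse_metric 0 y \<le> r"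
    using c(2) r(1) zero_in_cantor_set unfolding c_uniformly_perfect_def by blast
  from sparse_metric_from_0[OF y(1)] show False
  proof (elim disjE exE)
    assume "sparse_metric 0 y = 0"
    then show False using y(2) mult_pos_pos[OF c(1) r(1)] by simp
  next
    assume "sparse 0 \<le> sparse_metric 0 y"
    then show False using y r sparse_antimono[of 0 j] by linarith
  next
    fix i assume i: "sparse_metric 0 y = sparse i"
    show False
    proof (cases "i \<le> j")
      case True
      then show False using sparse_antimono[OF True] i y r by linarith
    next
      case False
      then show False using sparse_antimono[of "Suc j" i] i y j unfolding r_def by linarith
    qed
  qed
qed

end

lemma not_uniformly_perfect_Met_approx:
  assumes "d \<in> Met cantor_set" "\<epsilon> > 0"
  shows "\<exists>e\<in>Met cantor_set. \<not> uniformly_perfect cantor_set e \<and> DX cantor_set d e < ereal \<epsilon>"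
proof -
  interpret sparse_distances d \<epsilon> using assms by unfold_locales
  show ?thesis
    using sparse_metric_in_Met not_uniformly_perfect_sparse_metric DX_sparse_metric_less by blast
qed

theorem theorem1p5:
  shows "(fsigma_in (Met_topology cantor_set) {d \<in> Met cantor_set. uniformly_perfect cantor_set d}
          \<and> Met_topology cantor_set closure_of {d \<in> Met cantor_set. uniformly_perfect cantor_set d}
              = topspace (Met_topology cantor_set))
       \<and> (gdelta_in (Met_topology cantor_set) {d \<in> Met cantor_set. \<not> uniformly_perfect cantor_set d}
          \<and> Met_topology cantor_set closure_of {d \<in> Met cantor_set. \<not> uniformly_perfect cantor_set d}
              = topspace (Met_topology cantor_set))"
  using fsigma_in_uniformly_perfect gdelta_in_not_uniformly_perfect
    closure_of_Met_eq_topspace[OF uniformly_perfect_Met_approx]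
    closure_of_Met_eq_topspace[OF not_uniformly_perfect_Met_approx]
  by blast

end
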